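(* Let $G$ be a directed graph with vertices $s,t$ and $k\ge1$. The function $\hat d_{\mathrm{sum}}:U^k_{\mathrm{lr}}\to\mathbb N$, $\hat d_{\mathrm{sum}}(C)=\sum_{e\in E_{\mathrm{shr}}(C)}\binom{\mu_e(C)}{2}$, is submodular on the lattice $L^*$, i.e. $\hat d_{\mathrm{sum}}(C_1\vee C_2)+\hat d_{\mathrm{sum}}(C_1\wedge C_2)\le\hat d_{\mathrm{sum}}(C_1)+\hat d_{\mathrm{sum}}(C_2)$ for all $C_1,C_2\in L^*$.
   Context: An $s$-$t$ cut of a directed graph $G$ is a set $X\subseteq E(G)$ such that removing $X$ leaves no directed $s$-$t$ path; $\Gamma_G(s,t)$ is the set of $s$-$t$ cuts of minimum cardinality. Fix a maximum-size collection $\mathcal P$ of pairwise edge-disjoint directed $s$-$t$ paths (each minimum $s$-$t$ cut contains exactly one edge of each path in $\mathcal P$). For $X,Y\in\Gamma_G(s,t)$, $S_{\min}(X\cup Y)$ (resp. $S_{\max}(X\cup Y)$) consists, for each $p\in\mathcal P$, of the edge of $(X\cup Y)\cap p$ occurring first (resp. last) along $p$. $X\le Y$ means every directed $s$-$t$ path meets an edge of $X$ at or before an edge of $Y$. $U^k_{\mathrm{lr}}$ is the set of $k$-tuples $[X_1,\dots,X_k]$ of elements of $\Gamma_G(s,t)$ with $X_i\le X_j$ for all $i<j$. $L^*$ is the lattice on $U^k_{\mathrm{lr}}$ with componentwise order, join $[X_i]_i\vee[Y_i]_i=[S_{\max}(X_i\cup Y_i)]_i$ and meet $[X_i]_i\wedge[Y_i]_i=[S_{\min}(X_i\cup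 Y_i)]_i$. For $C=[X_1,\dots,X_k]$, $\mu_e(C)$ is the number of indices $i$ with $e\in X_i$, and $E_{\mathrm{shr}}(C)=\{e\in E(G):\mu_e(C)\ge2\}$. *)

theory Defs
  imports Main
begin

definition is_path :: "'e set \<Rightarrow> ('e \<Rightarrow> 'v) \<Rightarrow> ('e \<Rightarrow> 'v) \<Rightarrow> 'v \<Rightarrow> 'v \<Rightarrow> 'e list \<Rightarrow> bool" where
  "is_path E src dst s t p \<longleftrightarrow>
     p \<noteq> [] \<and> set p \<subseteq> E \<and> src (hd p) = s \<and> dst (last p) = t \<and>
     (\<forall>i. Suc i < length p \<longrightarrow> dst (p ! i) = src (p ! Suc i)) \<and>
     distinct (map src p @ [t])"

definition is_cut :: "'e set \<Rightarrow> ('e \<Rightarrow> 'v) \<Rightarrow> ('e \<Rightarrow> 'v) \<Rightarrow> 'v \<Rightarrow> 'v \<Rightarrow> 'e set \<Rightarrow> bool" where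
  "is_cut E src dst s t X \<longleftrightarrow> X \<subseteq> E \<and>
     (\<forall>p. is_path E src dst s t p \<longrightarrow> set p \<inter> X \<noteq> {})"

definition min_cuts :: "'e set \<Rightarrow> ('e \<Rightarrow> 'v) \<Rightarrow> ('e \<Rightarrow> 'v) \<Rightarrow> 'v \<Rightarrow> 'v \<Rightarrow> 'e set set" where
  "min_cuts E src dst s t = {X. is_cut E src dst s t X \<and>
     (\<forall>Y. is_cut E src dst s t Y \<longrightarrow> card X \<le> card Y)}"

definition edge_disjoint_paths :: "'e set \<Rightarrow> ('e \<Rightarrow> 'v) \<Rightarrow> ('e \<Rightarrow> 'v) \<Rightarrow> 'v \<Rightarrow> 'v \<Rightarrow> 'e list set \<Rightarrow> bool" where
  "edge_disjoint_paths E src dst s t P \<longleftrightarrow>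
     (\<forall>p\<in>P. is_path E src dst s t p) \<and>
     (\<forall>p\<in>P. \<forall>q\<in>P. p \<noteq> q \<longrightarrow> set p \<inter> set q = {})"

definition max_disjoint_paths :: "'e set \<Rightarrow> ('e \<Rightarrow> 'v) \<Rightarrow> ('e \<Rightarrow> 'v) \<Rightarrow> 'v \<Rightarrow> 'v \<Rightarrow> 'e list set \<Rightarrow> bool" where
  "max_disjoint_paths E src dst s t P \<longleftrightarrow> finite P \<and> edge_disjoint_paths E src dst s t P \<and>
     (\<forall>Q. finite Q \<and> edge_disjoint_paths E src dst s t Q \<longrightarrow> card Q \<le> card P)"

definition S_min :: "'e list set \<Rightarrow> 'e set \<Rightarrow> 'e set" where
  "S_min P Z = (\<lambda>p. hd (filter (\<lambda>e. e \<in> Z) p)) ` P"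

definition S_max :: "'e list set \<Rightarrow> 'e set \<Rightarrow> 'e set" where
  "S_max P Z = (\<lambda>p. last (filter (\<lambda>e. e \<in> Z) p)) ` P"

definition cut_le :: "'e set \<Rightarrow> ('e \<Rightarrow> 'v) \<Rightarrow> ('e \<Rightarrow> 'v) \<Rightarrow> 'v \<Rightarrow> 'v \<Rightarrow> 'e set \<Rightarrow> 'e set \<Rightarrow> bool" where
  "cut_le E src dst s t X Y \<longleftrightarrow>
     (\<forall>p. is_path E src dst s t p \<longrightarrow>
        (\<exists>i j. i \<le> j \<and> j < length p \<and> p ! i \<in> X \<and> p ! j \<in> Y))"

definition U_lr :: "'e set \<Rightarrow> ('e \<Rightarrow> 'v) \<Rightarrow> ('e \<Rightarrow> 'v) \<Rightarrow> 'v \<Rightarrow> 'v \<Rightarrow> nat \<Rightarrow> 'e set list set" where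
  "U_lr E src dst s t k = {C. length C = k \<and> (\<forall>i<k. C ! i \<in> min_cuts E src dst s t) \<and>
     (\<forall>i j. i < j \<and> j < k \<longrightarrow> cut_le E src dst s t (C ! i) (C ! j))}"

definition tuple_join :: "'e list set \<Rightarrow> 'e set list \<Rightarrow> 'e set list \<Rightarrow> 'e set list" where
  "tuple_join P C D = map2 (\<lambda>X Y. S_max P (X \<union> Y)) C D"

definition tuple_meet :: "'e list set \<Rightarrow> 'e set list \<Rightarrow> 'e set list \<Rightarrow> 'e set list" where
  "tuple_meet P C D = map2 (\<lambda>X Y. S_min P (X \<union> Y)) C D"

definition mult :: "'e set list \<Rightarrow> 'e \<Rightarrow> nat" where
  "mult C e = length (filter (\<lambda>X. e \<in> X) C)"

definition E_shr :: "'e set \<Rightarrow> 'e set list \<Rightarrow> 'e set" where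
  "E_shr E C = {e \<in> E. mult C e \<ge> 2}"

definition d_sum :: "'e set \<Rightarrow> 'e set list \<Rightarrow> nat" where
  "d_sum E C = (\<Sum>e\<in>E_shr E C. mult C e choose 2)"

end

theory Submission
  imports Defs
begin

(*
  A maximum packing P of edge-disjoint s-t paths certifies max-flow/min-cut: the edges leaving
  the set of vertices reachable from s in the residual graph of P form an s-t cut meeting each
  path of P at most once (a residual s-t walk would augment P). Hence a minimum cut has exactly
  card P edges, all on the paths of P, one on each path, and is described by one position per
  path; X <= Y says that these positions increase pointwise. For such cuts, S_max and S_min of a
  union take the pathwise maximum and minimum of the positions, and card (X Int Y) counts the
  paths on which X and Y choose the same position. As d_sum C is the sum of card (C_i Int C_j)
  over i < j, submodularity reduces to: for a <= a' and b <= b', the pairs (max a b, max a' b')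
  and (min a b, min a' b') agree no more often than the pairs (a, a') and (b, b') do.
*)

lemma hd_filter_eq_nth:
  assumes "i < length xs" "Q (xs ! i)" "\<forall>j<i. \<not> Q (xs ! j)"
  shows "hd (filter Q xs) = xs ! i"
proof -
  have "filter Q (take i xs) = []"
    using assms(1,3) by (auto simp: filter_empty_conv in_set_conv_nth)
  then have "filter Q xs = xs ! i # filter Q (drop (Suc i) xs)"
    using assms(1,2) by (subst id_take_nth_drop[OF assms(1)]) simp
  then show ?thesis
    by simp
qed

lemma last_filter_eq_nth:
  assumes "i < length xs" "Q (xs ! i)" "\<forall>j. i < j \<and> j < length xs \<longrightarrow> \<not> Q (xs ! j)"
  shows "last (filter Q xs) = xs ! i"
proof -
  have "filter Q (drop (Suc i) xs) = []"
    using assms(3) by (auto simp: filter_empty_conv in_set_conv_nth)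
  then have "filter Q xs = filter Q (take i xs) @ [xs ! i]"
    using assms(2) by (subst id_take_nth_drop[OF assms(1)]) simp
  then show ?thesis
    by simp
qed

lemma of_bool_max_eq_plus_of_bool_min_eq_le:
  fixes a a' b b' :: "'a::linorder"
  assumes "a \<le> a'" "b \<le> b'"
  shows "of_bool (max a b = max a' b') + of_bool (min a b = min a' b')
    \<le> (of_bool (a = a') + of_bool (b = b') :: nat)"
  using assms by (auto simp: max_def min_def)

lemma card_ordered_pairs:
  fixes I :: "'a::linorder set"
  assumes "finite I"
  shows "card {(i, j). i \<in> I \<and> j \<in> I \<and> i < j} = card I choose 2"
proof -
  let ?S = "{(i, j). i \<in> I \<and> j \<in> I \<and> i < j}"
  have inj: "inj_on (\<lambda>(i, j). {i, j}) ?S"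
    by (auto simp: inj_on_def doubleton_eq_iff)
  have image: "(\<lambda>(i, j). {i, j}) ` ?S = {B. B \<subseteq> I \<and> card B = 2}"
  proof (intro equalityI subsetI)
    fix B assume "B \<in> {B. B \<subseteq> I \<and> card B = 2}"
    then obtain x y where B: "B = {x, y}" "x \<noteq> y" "B \<subseteq> I"
      by (auto simp: card_2_iff)
    then have "B = {min x y, max x y}" "min x y < max x y"
      by (auto simp: min_def max_def)
    then show "B \<in> (\<lambda>(i, j). {i, j}) ` ?S"
      using B(3) by (auto intro!: image_eqI[of _ _ "(min x y, max x y)"])
  qed auto
  have "card ?S = card ((\<lambda>(i, j). {i, j}) ` ?S)"
    by (rule card_image[OF inj, symmetric])
  also have "\<dots> = card I choose 2"
    unfolding image by (rule n_subsets[OF assms])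
  finally show ?thesis .
qed

lemma d_sum_eq_sum_pairs:
  assumes "finite E" "\<forall>X\<in>set C. X \<subseteq> E"
  shows "d_sum E C = (\<Sum>(i, j)\<in>{(i, j). i < j \<and> j < length C}. card (C ! i \<inter> C ! j))"
proof -
  let ?Pairs = "{(i, j). i < j \<and> j < length C}"
  have "finite ?Pairs"
    by (rule finite_subset[of _ "{..<length C} \<times> {..<length C}"]) auto
  have "d_sum E C = (\<Sum>e\<in>E. mult C e choose 2)"
    unfolding d_sum_def E_shr_def by (rule sum.mono_neutral_left[OF assms(1)]) auto
  also have "\<dots> = (\<Sum>e\<in>E. \<Sum>(i, j)\<in>?Pairs. of_bool (e \<in> C ! i \<and> e \<in> C ! j))"
  proof (intro sum.cong refl)
    fix e
    let ?I = "{i. i < length C \<and> e \<in> C ! i}"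
    have "mult C e = card ?I"
      by (simp add: mult_def length_filter_conv_card)
    then have "mult C e choose 2 = card {(i, j). i \<in> ?I \<and> j \<in> ?I \<and> i < j}"
      using card_ordered_pairs[of ?I] by simp
    also have "{(i, j). i \<in> ?I \<and> j \<in> ?I \<and> i < j} = {(i, j) \<in> ?Pairs. e \<in> C ! i \<and> e \<in> C ! j}"
      by auto
    also have "card \<dots> = (\<Sum>(i, j)\<in>?Pairs. of_bool (e \<in> C ! i \<and> e \<in> C ! j))"
      using \<open>finite ?Pairs\<close> by (simp add: case_prod_unfold Int_def)
    finally show "mult C e choose 2 = (\<Sum>(i, j)\<in>?Pairs. of_bool (e \<in> C ! i \<and> e \<in> C ! j))" .
  qed
  also have "\<dots> = (\<Sum>(i, j)\<in>?Pairs. \<Sum>e\<in>E. of_bool (e \<in> C ! i \<and> e \<in> C ! j))"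
    by (subst sum.swap) (simp only: case_prod_unfold)
  also have "\<dots> = (\<Sum>(i, j)\<in>?Pairs. card (C ! i \<inter> C ! j))"
  proof (intro sum.cong refl, clarify)
    fix i j assume "i < j" "j < length C"
    then have "C ! i \<inter> C ! j = {e \<in> E. e \<in> C ! i \<and> e \<in> C ! j}"
      using assms(2) nth_mem[of i C] by auto
    then show "(\<Sum>e\<in>E. of_bool (e \<in> C ! i \<and> e \<in> C ! j)) = card (C ! i \<inter> C ! j)"
      using assms(1) by (simp add: sum.If_cases Int_def of_bool_def)
  qed
  finally show ?thesis .
qed

section \<open>Walks and decomposition of flows into paths\<close>

fun walk :: "('a \<Rightarrow> bool) \<Rightarrow> ('a \<Rightarrow> 'v) \<Rightarrow> ('a \<Rightarrow> 'v) \<Rightarrow> 'v \<Rightarrow> 'a list \<Rightarrow> 'v \<Rightarrow> bool" where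
  "walk arc tail head u [] v \<longleftrightarrow> u = v"
| "walk arc tail head u (a # p) v \<longleftrightarrow> arc a \<and> tail a = u \<and> walk arc tail head (head a) p v"

lemma walk_append:
  "walk arc tail head u (p @ q) v \<longleftrightarrow> (\<exists>w. walk arc tail head u p w \<and> walk arc tail head w q v)"
  by (induct p arbitrary: u) auto

lemma walk_snoc:
  "walk arc tail head u (p @ [a]) v \<longleftrightarrow> walk arc tail head u p (tail a) \<and> arc a \<and> head a = v"
  by (auto simp: walk_append)

lemma walk_arc: "walk arc tail head u p v \<Longrightarrow> a \<in> set p \<Longrightarrow> arc a"
  by (induct p arbitrary: u) auto

lemma walk_mono: "walk arc tail head u p v \<Longrightarrow> (\<And>a. arc a \<Longrightarrow> arc' a) \<Longrightarrow> walk arc' tail head u p v"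
  by (induct p arbitrary: u) auto

lemma walk_leaves_set:
  "walk arc tail head u p v \<Longrightarrow> u \<in> S \<Longrightarrow> v \<notin> S \<Longrightarrow> \<exists>a\<in>set p. tail a \<in> S \<and> head a \<notin> S"
  by (induct p arbitrary: u) auto

lemma walk_iff_chain:
  "p \<noteq> [] \<Longrightarrow> walk arc tail head u p v \<longleftrightarrow> (\<forall>a\<in>set p. arc a) \<and> tail (hd p) = u \<and> head (last p) = v \<and>
     (\<forall>i. Suc i < length p \<longrightarrow> head (p ! i) = tail (p ! Suc i))"
proof (induct p arbitrary: u)
  case (Cons a p)
  then show ?case
    by (cases p) (auto simp: nth_Cons split: nat.splits)
qed simp

lemma is_path_iff_walk:
  "is_path E src dst s t p \<longleftrightarrow> p \<noteq> [] \<and> walk (\<lambda>e. e \<in> E) src dst s p t \<and> distinct (map src p @ [t])"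
  unfolding is_path_def using walk_iff_chain[of p "\<lambda>e. e \<in> E" src dst s t] by auto

lemma walk_shorten:
  "walk arc tail head u p v \<Longrightarrow>
     \<exists>q. walk arc tail head u q v \<and> distinct (map tail q @ [v]) \<and> set q \<subseteq> set p"
proof (induct p arbitrary: u)
  case (Cons a p)
  then have a: "arc a" "tail a = u" and "walk arc tail head (head a) p v" by auto
  with Cons.hyps obtain q where q: "walk arc tail head (head a) q v" "distinct (map tail q @ [v])"
    "set q \<subseteq> set p" by blast
  show ?case
  proof (cases "u \<in> set (map tail q @ [v])")
    case False
    then show ?thesis using a q by (intro exI[of _ "a # q"]) auto
  next
    case True
    show ?thesis
    proof (cases "u = v")
      case True
      then show ?thesis by (intro exI[of _ "[]"]) auto
    next
      case False
      with \<open>u \<in> set (map tail q @ [v])\<close> obtain b where "b \<in> set q" "tail b = u" by auto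
      moreover from \<open>b \<in> set q\<close> obtain q1 q2 where "q = q1 @ b # q2" by (meson split_list)
      ultimately show ?thesis using q by (intro exI[of _ "b # q2"]) (auto simp: walk_append)
    qed
  qed
qed simp

definition net_out :: "('a \<Rightarrow> 'v) \<Rightarrow> ('a \<Rightarrow> 'v) \<Rightarrow> 'a set \<Rightarrow> 'v \<Rightarrow> int" where
  "net_out tail head F x = (\<Sum>a\<in>F. of_bool (tail a = x) - of_bool (head a = x))"

lemma net_out_Un_disjoint:
  "finite F \<Longrightarrow> finite G \<Longrightarrow> F \<inter> G = {} \<Longrightarrow>
     net_out tail head (F \<union> G) x = net_out tail head F x + net_out tail head G x"
  unfolding net_out_def by (rule sum.union_disjoint)

lemma net_out_Diff:
  "finite F \<Longrightarrow> G \<subseteq> F \<Longrightarrow> net_out tail head (F - G) x = net_out tail head F x - net_out tail head G x"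
  unfolding net_out_def by (simp add: sum_diff)

lemma sum_net_out:
  "finite F \<Longrightarrow> finite W \<Longrightarrow>
     (\<Sum>x\<in>W. net_out tail head F x) = (\<Sum>a\<in>F. of_bool (tail a \<in> W) - of_bool (head a \<in> W))"
  unfolding net_out_def by (subst sum.swap) (simp add: sum_subtractf of_bool_def sum.delta')

lemma net_out_simple_walk:
  "walk arc tail head u p v \<Longrightarrow> distinct (map tail p @ [v]) \<Longrightarrow>
     net_out tail head (set p) x = of_bool (x = u) - of_bool (x = v)"
proof (induct p arbitrary: u)
  case (Cons a p)
  then have "a \<notin> set p" by auto
  with Cons show ?case by (auto simp: net_out_def)
qed (simp add: net_out_def)

lemma walk_to_sink_if_net_out_pos:
  assumes fin: "finite F"
    and conserv: "\<And>x. x \<noteq> s \<Longrightarrow> x \<noteq> t \<Longrightarrow> net_out tail head F x = 0"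
    and source: "net_out tail head F s > 0"
  shows "\<exists>w. walk (\<lambda>a. a \<in> F) tail head s w t"
proof (rule ccontr)
  assume unreachable: "\<nexists>w. walk (\<lambda>a. a \<in> F) tail head s w t"
  (* No edge of F leaves the set W of vertices reachable from s, so the net outflow of W is
     at most 0; by conservation it equals the positive net outflow at s. *)
  define W where "W = {x \<in> insert s (tail ` F \<union> head ` F). \<exists>w. walk (\<lambda>a. a \<in> F) tail head s w x}"
  have "finite W" "s \<in> W" "t \<notin> W"
    using fin unreachable unfolding W_def by (auto intro: exI[of _ "[]"])
  have closed: "head a \<in> W" if "a \<in> F" "tail a \<in> W" for a
  proof -
    from that obtain w where "walk (\<lambda>a. a \<in> F) tail head s w (tail a)"
      unfolding W_def by blast
    then have "walk (\<lambda>a. a \<in> F) tail head s (w @ [a]) (head a)"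
      using that by (simp add: walk_snoc)
    then show ?thesis
      using that unfolding W_def by blast
  qed
  have "(\<Sum>x\<in>W. net_out tail head F x) = net_out tail head F s"
  proof -
    have "net_out tail head F x = 0" if "x \<in> W - {s}" for x
      using that \<open>t \<notin> W\<close> conserv by fastforce
    then show ?thesis
      using \<open>finite W\<close> \<open>s \<in> W\<close> by (simp add: sum.remove)
  qed
  moreover have "(\<Sum>a\<in>F. of_bool (tail a \<in> W) - of_bool (head a \<in> W)) \<le> (0::int)"
    using closed by (intro sum_nonpos) auto
  ultimately show False
    using source sum_net_out[OF fin \<open>finite W\<close>] by simp
qed

lemma path_if_net_out_pos:
  assumes "s \<noteq> t" "finite F" "F \<subseteq> E"
    and "\<And>x. x \<noteq> s \<Longrightarrow> x \<noteq> t \<Longrightarrow> net_out src dst F x = 0"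
    and "net_out src dst F s > 0"
  obtains p where "is_path E src dst s t p" "set p \<subseteq> F"
proof -
  obtain w where "walk (\<lambda>e. e \<in> F) src dst s w t"
    using walk_to_sink_if_net_out_pos[of F s t src dst, OF assms(2,4,5)] by blast
  then obtain p where p: "walk (\<lambda>e. e \<in> F) src dst s p t" "distinct (map src p @ [t])"
    by (blast dest: walk_shorten)
  then have "p \<noteq> []" "set p \<subseteq> F"
    using \<open>s \<noteq> t\<close> by (auto dest: walk_arc)
  moreover have "walk (\<lambda>e. e \<in> E) src dst s p t"
    using walk_mono[OF p(1), of "\<lambda>e. e \<in> E"] \<open>F \<subseteq> E\<close> by blast
  ultimately show thesis
    using that p(2) by (simp add: is_path_iff_walk)
qed

lemma disjoint_paths_if_net_out:
  assumes "s \<noteq> t" "finite F" "F \<subseteq> E"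
    and "\<And>x. x \<noteq> s \<Longrightarrow> x \<noteq> t \<Longrightarrow> net_out src dst F x = 0"
    and "int m \<le> net_out src dst F s"
  shows "\<exists>Q. finite Q \<and> card Q = m \<and> edge_disjoint_paths E src dst s t Q \<and> (\<forall>q\<in>Q. set q \<subseteq> F)"
  using assms(2-5)
proof (induct m arbitrary: F)
  case 0
  then show ?case by (intro exI[of _ "{}"]) (simp add: edge_disjoint_paths_def)
next
  case (Suc m)
  have "net_out src dst F s > 0"
    using Suc.prems(4) by simp
  then obtain p where p: "is_path E src dst s t p" "set p \<subseteq> F"
    using path_if_net_out_pos[OF \<open>s \<noteq> t\<close> Suc.prems(1-3)] by blast
  have "net_out src dst (set p) x = of_bool (x = s) - of_bool (x = t)" for x
    using p(1) unfolding is_path_iff_walk by (blast intro: net_out_simple_walk)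
  then have net_rest: "net_out src dst (F - set p) x =
      net_out src dst F x - (of_bool (x = s) - of_bool (x = t))" for x
    using Suc.prems(1) p(2) by (simp add: net_out_Diff)
  have "\<exists>Q. finite Q \<and> card Q = m \<and> edge_disjoint_paths E src dst s t Q \<and> (\<forall>q\<in>Q. set q \<subseteq> F - set p)"
    using Suc.prems \<open>s \<noteq> t\<close> by (intro Suc.hyps) (auto simp: net_rest)
  then obtain Q where Q: "finite Q" "card Q = m" "edge_disjoint_paths E src dst s t Q"
    and QF: "\<forall>q\<in>Q. set q \<subseteq> F - set p" by blast
  have disj: "\<forall>q\<in>Q. set p \<inter> set q = {}"
    using QF by blast
  moreover have "p \<notin> Q"
    using disj p(1) by (auto simp: is_path_def)
  ultimately show ?case
    using Q QF p
    by (intro exI[of _ "insert p Q"]) (auto simp: edge_disjoint_paths_def)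
qed

(* An arc (e, True) traverses the edge e forwards, (e, False) traverses it backwards. *)
definition arc_tail :: "('e \<Rightarrow> 'v) \<Rightarrow> ('e \<Rightarrow> 'v) \<Rightarrow> 'e \<times> bool \<Rightarrow> 'v" where
  "arc_tail src dst a = (if snd a then src (fst a) else dst (fst a))"

definition arc_head :: "('e \<Rightarrow> 'v) \<Rightarrow> ('e \<Rightarrow> 'v) \<Rightarrow> 'e \<times> bool \<Rightarrow> 'v" where
  "arc_head src dst a = (if snd a then dst (fst a) else src (fst a))"

definition forward_edges :: "('e \<times> bool) set \<Rightarrow> 'e set" where
  "forward_edges A = {e. (e, True) \<in> A}"

definition backward_edges :: "('e \<times> bool) set \<Rightarrow> 'e set" where
  "backward_edges A = {e. (e, False) \<in> A}"

lemma net_out_signed_arcs: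
  assumes "finite A"
  shows "net_out (arc_tail src dst) (arc_head src dst) A x =
    net_out src dst (forward_edges A) x - net_out src dst (backward_edges A) x"
proof -
  let ?fw = "(\<lambda>e. (e, True)) ` forward_edges A" and ?bw = "(\<lambda>e. (e, False)) ` backward_edges A"
  have A: "A = ?fw \<union> ?bw"
  proof (intro equalityI subsetI)
    fix a assume "a \<in> A"
    moreover obtain e b where "a = (e, b)"
      by fastforce
    ultimately show "a \<in> ?fw \<union> ?bw"
      by (cases b) (auto simp: forward_edges_def backward_edges_def)
  qed (auto simp: forward_edges_def backward_edges_def)
  have "net_out (arc_tail src dst) (arc_head src dst) ?fw x = net_out src dst (forward_edges A) x"
    by (simp add: net_out_def sum.reindex inj_on_def arc_tail_def arc_head_def)
  moreover have
    "net_out (arc_tail src dst) (arc_head src dst) ?bw x = - net_out src dst (backward_edges A) x"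
    by (simp add: net_out_def sum.reindex inj_on_def arc_tail_def arc_head_def sum_negf[symmetric])
  moreover have "finite ?fw" "finite ?bw" "?fw \<inter> ?bw = {}"
    using A \<open>finite A\<close> by (auto intro: finite_subset)
  ultimately show ?thesis
    by (subst A) (simp add: net_out_Un_disjoint)
qed

section \<open>Minimum cuts of a maximum path packing\<close>

locale path_packing =
  fixes E :: "'e set" and src dst :: "'e \<Rightarrow> 'v" and s t :: 'v and P :: "'e list set"
  assumes finite_E: "finite E" and max_P: "max_disjoint_paths E src dst s t P"
begin

definition path_edges :: "'e set" where
  "path_edges = \<Union> (set ` P)"

lemma finite_P: "finite P"
  using max_P by (simp add: max_disjoint_paths_def)

lemma is_path_P: "p \<in> P \<Longrightarrow> is_path E src dst s t p"
  using max_P by (simp add: max_disjoint_paths_def edge_disjoint_paths_def)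

lemma disjoint_P: "p \<in> P \<Longrightarrow> q \<in> P \<Longrightarrow> p \<noteq> q \<Longrightarrow> set p \<inter> set q = {}"
  using max_P by (simp add: max_disjoint_paths_def edge_disjoint_paths_def)

lemma card_le_card_P: "finite Q \<Longrightarrow> edge_disjoint_paths E src dst s t Q \<Longrightarrow> card Q \<le> card P"
  using max_P by (simp add: max_disjoint_paths_def)

lemma distinct_P: "p \<in> P \<Longrightarrow> distinct p"
  using is_path_P by (simp add: is_path_def distinct_map)

lemma path_edges_subset: "path_edges \<subseteq> E"
  using is_path_P unfolding path_edges_def is_path_def by blast

lemma finite_path_edges: "finite path_edges"
  using path_edges_subset finite_E by (rule finite_subset)

lemma card_Int_path_edges:
  "card (X \<inter> path_edges) = (\<Sum>p\<in>P. card (X \<inter> set p))"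
proof -
  have "X \<inter> path_edges = (\<Union>p\<in>P. X \<inter> set p)"
    by (auto simp: path_edges_def)
  then show ?thesis
    using card_UN_disjoint[of P "\<lambda>p. X \<inter> set p"] finite_P disjoint_P by fastforce
qed

lemma net_out_path_edges:
  "net_out src dst path_edges x = int (card P) * (of_bool (x = s) - of_bool (x = t))"
proof -
  have "net_out src dst path_edges x = (\<Sum>p\<in>P. net_out src dst (set p) x)"
    unfolding path_edges_def net_out_def using finite_P disjoint_P
    by (intro sum.UNION_disjoint) auto
  also have "\<dots> = (\<Sum>p\<in>P. of_bool (x = s) - of_bool (x = t))"
    using is_path_P unfolding is_path_iff_walk
    by (intro sum.cong refl) (blast intro: net_out_simple_walk)
  finally show ?thesis by simp
qed

(* The residual graph of P: edges off the paths forwards, edges on the paths backwards. *)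
definition residual_arc :: "'e \<times> bool \<Rightarrow> bool" where
  "residual_arc a \<longleftrightarrow> (if snd a then fst a \<in> E - path_edges else fst a \<in> path_edges)"

definition residual_reach :: "'v set" where
  "residual_reach = {v. \<exists>w. walk residual_arc (arc_tail src dst) (arc_head src dst) s w v}"

lemma source_in_residual_reach: "s \<in> residual_reach"
  unfolding residual_reach_def by (auto intro: exI[of _ "[]"])

lemma residual_reach_step:
  assumes "v \<in> residual_reach" "residual_arc a" "arc_tail src dst a = v"
  shows "arc_head src dst a \<in> residual_reach"
proof -
  from assms(1) obtain w where "walk residual_arc (arc_tail src dst) (arc_head src dst) s w v"
    unfolding residual_reach_def by blast
  then have
    "walk residual_arc (arc_tail src dst) (arc_head src dst) s (w @ [a]) (arc_head src dst a)"
    using assms(2,3) by (simp add: walk_snoc)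
  then show ?thesis
    unfolding residual_reach_def by blast
qed

lemma residual_reach_forward:
  "e \<in> E - path_edges \<Longrightarrow> src e \<in> residual_reach \<Longrightarrow> dst e \<in> residual_reach"
  using residual_reach_step[of "src e" "(e, True)"]
  by (simp add: residual_arc_def arc_tail_def arc_head_def)

lemma residual_reach_backward:
  "e \<in> path_edges \<Longrightarrow> dst e \<in> residual_reach \<Longrightarrow> src e \<in> residual_reach"
  using residual_reach_step[of "dst e" "(e, False)"]
  by (simp add: residual_arc_def arc_tail_def arc_head_def)

lemma sink_notin_residual_reach:
  assumes "s \<noteq> t"
  shows "t \<notin> residual_reach"
proof
  assume "t \<in> residual_reach"
  then obtain w where w: "walk residual_arc (arc_tail src dst) (arc_head src dst) s w t"
    "distinct (map (arc_tail src dst) w @ [t])"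
    unfolding residual_reach_def by (blast dest: walk_shorten)
  (* Augmenting P along w yields an edge set with net outflow card P + 1 at s. *)
  define F where "F = (path_edges - backward_edges (set w)) \<union> forward_edges (set w)"
  have fw: "forward_edges (set w) \<subseteq> E - path_edges" and bw: "backward_edges (set w) \<subseteq> path_edges"
    by (auto simp: forward_edges_def backward_edges_def residual_arc_def dest: walk_arc[OF w(1)])
  have fin_fw: "finite (forward_edges (set w))"
    using fw finite_E by (auto intro: finite_subset)
  have "F \<subseteq> E" "finite F"
    using fw fin_fw path_edges_subset finite_path_edges by (auto simp: F_def)
  moreover have net_F:
    "net_out src dst F x = net_out src dst path_edges x + (of_bool (x = s) - of_bool (x = t))" for x
  proof -
    have "net_out src dst F x =
        net_out src dst (path_edges - backward_edges (set w)) x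
        + net_out src dst (forward_edges (set w)) x"
      unfolding F_def using fw fin_fw finite_path_edges by (intro net_out_Un_disjoint) auto
    also have "\<dots> = net_out src dst path_edges x - net_out src dst (backward_edges (set w)) x
        + net_out src dst (forward_edges (set w)) x"
      using bw finite_path_edges by (simp add: net_out_Diff)
    also have "\<dots> =
        net_out src dst path_edges x + net_out (arc_tail src dst) (arc_head src dst) (set w) x"
      by (simp add: net_out_signed_arcs)
    finally show ?thesis
      using net_out_simple_walk[OF w] by simp
  qed
  ultimately have "\<exists>Q. finite Q \<and> card Q = Suc (card P) \<and> edge_disjoint_paths E src dst s t Q \<and>
      (\<forall>q\<in>Q. set q \<subseteq> F)"
    by (intro disjoint_paths_if_net_out[OF assms]) (simp_all add: net_F net_out_path_edges assms)
  then obtain Q where Q: "finite Q" "edge_disjoint_paths E src dst s t Q" "card Q = Suc (card P)"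
    by blast
  then show False
    using card_le_card_P[OF Q(1,2)] by simp
qed

definition residual_cut :: "'e set" where
  "residual_cut = {e \<in> E. src e \<in> residual_reach \<and> dst e \<notin> residual_reach}"

lemma is_cut_residual_cut:
  assumes "s \<noteq> t"
  shows "is_cut E src dst s t residual_cut"
  unfolding is_cut_def
proof (intro conjI allI impI)
  show "residual_cut \<subseteq> E"
    by (auto simp: residual_cut_def)
  fix p assume "is_path E src dst s t p"
  then have walk: "walk (\<lambda>e. e \<in> E) src dst s p t"
    by (simp add: is_path_iff_walk)
  then obtain e where "e \<in> set p" "src e \<in> residual_reach" "dst e \<notin> residual_reach"
    using walk_leaves_set[OF walk, of residual_reach] source_in_residual_reach
      sink_notin_residual_reach[OF assms]
    by blast
  moreover have "e \<in> E"
    using walk_arc[OF walk \<open>e \<in> set p\<close>] by simp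
  ultimately show "set p \<inter> residual_cut \<noteq> {}"
    by (auto simp: residual_cut_def)
qed

lemma residual_cut_subset_path_edges: "residual_cut \<subseteq> path_edges"
  using residual_reach_forward by (auto simp: residual_cut_def)

lemma residual_cut_not_twice_on_path:
  assumes "p \<in> P" "p = a @ e1 # b @ e2 # c" "e1 \<in> residual_cut"
  shows "e2 \<notin> residual_cut"
proof
  assume "e2 \<in> residual_cut"
  have "walk (\<lambda>e. e \<in> E) src dst s p t"
    using is_path_P[OF assms(1)] by (simp add: is_path_iff_walk)
  then have "walk (\<lambda>e. e \<in> E) src dst (dst e1) b (src e2)"
    using assms(2) by (auto simp: walk_append)
  then obtain x where "x \<in> set b" "src x \<notin> residual_reach" "dst x \<in> residual_reach"
    using walk_leaves_set[of _ src dst "dst e1" b "src e2" "- residual_reach"]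
      assms(3) \<open>e2 \<in> residual_cut\<close>
    by (auto simp: residual_cut_def)
  moreover have "x \<in> path_edges"
    using assms(1,2) \<open>x \<in> set b\<close> unfolding path_edges_def by (intro UN_I[of p]) auto
  ultimately show False
    using residual_reach_backward by blast
qed

lemma card_residual_cut_Int_path:
  assumes "p \<in> P"
  shows "card (residual_cut \<inter> set p) \<le> 1"
proof -
  have "e1 = e2" if e: "e1 \<in> residual_cut \<inter> set p" "e2 \<in> residual_cut \<inter> set p" for e1 e2
  proof (rule ccontr)
    assume "e1 \<noteq> e2"
    obtain a b where p: "p = a @ e1 # b"
      using e(1) by (meson IntD2 split_list)
    with e(2) \<open>e1 \<noteq> e2\<close> have "e2 \<in> set a \<or> e2 \<in> set b"
      by auto
    then show False
    proof
      assume "e2 \<in> set a"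
      then obtain a1 a2 where "p = a1 @ e2 # a2 @ e1 # b"
        using p by (auto dest: split_list)
      then show False
        using residual_cut_not_twice_on_path[OF assms] e by blast
    next
      assume "e2 \<in> set b"
      then obtain b1 b2 where "p = a @ e1 # b1 @ e2 # b2"
        using p by (auto dest: split_list)
      then show False
        using residual_cut_not_twice_on_path[OF assms] e by blast
    qed
  qed
  then show ?thesis
    by (simp add: card_le_Suc0_iff_eq)
qed

lemma card_residual_cut: "card residual_cut \<le> card P"
proof -
  have "card residual_cut = (\<Sum>p\<in>P. card (residual_cut \<inter> set p))"
    using card_Int_path_edges[of residual_cut] residual_cut_subset_path_edges
    by (simp add: Int_absorb2)
  also have "\<dots> \<le> (\<Sum>p\<in>P. 1)"
    using card_residual_cut_Int_path by (intro sum_mono) auto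
  finally show ?thesis
    by simp
qed

lemma card_min_cut_le:
  assumes "X \<in> min_cuts E src dst s t"
  shows "card X \<le> card P"
proof (cases "s = t")
  case True
  then have "is_cut E src dst s t {}"
    by (auto simp: is_cut_def is_path_def neq_Nil_conv)
  then show ?thesis
    using assms by (force simp: min_cuts_def)
next
  case False
  then show ?thesis
    using assms is_cut_residual_cut card_residual_cut by (force simp: min_cuts_def)
qed

lemma min_cut_meets_paths_once:
  assumes "X \<in> min_cuts E src dst s t"
  shows "X \<subseteq> path_edges" and "p \<in> P \<Longrightarrow> card (X \<inter> set p) = 1"
proof -
  have cut: "is_cut E src dst s t X" and card_X: "card X \<le> card P"
    using assms card_min_cut_le by (auto simp: min_cuts_def)
  then have "finite X"
    using finite_E by (auto simp: is_cut_def intro: finite_subset)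
  have meets: "1 \<le> card (X \<inter> set p)" if "p \<in> P" for p
    using cut is_path_P[OF that] \<open>finite X\<close> by (auto simp: is_cut_def card_gt_0_iff Suc_le_eq)
  have "card P \<le> (\<Sum>p\<in>P. card (X \<inter> set p))"
    using sum_mono[of P "\<lambda>_. 1" "\<lambda>p. card (X \<inter> set p)"] meets by simp
  moreover have "card (X \<inter> path_edges) \<le> card X"
    using \<open>finite X\<close> by (simp add: card_mono)
  ultimately have tight: "(\<Sum>p\<in>P. card (X \<inter> set p)) = card P" "card (X \<inter> path_edges) = card X"
    using card_X card_Int_path_edges[of X] by linarith+
  have "X \<inter> path_edges = X"
    by (rule card_subset_eq[OF \<open>finite X\<close> _ tight(2)]) simp
  then show "X \<subseteq> path_edges"
    by blast
  assume "p \<in> P"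
  have "(\<Sum>p\<in>P. card (X \<inter> set p) - 1) = 0"
    using meets tight(1) by (simp add: sum_subtractf_nat)
  then have "card (X \<inter> set p) - 1 = 0"
    using \<open>p \<in> P\<close> by (simp only: sum_eq_0_iff[OF finite_P])
  then show "card (X \<inter> set p) = 1"
    using meets[OF \<open>p \<in> P\<close>] by linarith
qed

section \<open>Minimum cuts as positions on the paths\<close>

definition transversal :: "'e set \<Rightarrow> bool" where
  "transversal A \<longleftrightarrow> A \<subseteq> path_edges \<and> (\<forall>p\<in>P. \<exists>!i. i < length p \<and> p ! i \<in> A)"

definition cut_pos :: "'e set \<Rightarrow> 'e list \<Rightarrow> nat" where
  "cut_pos A p = (THE i. i < length p \<and> p ! i \<in> A)"

lemma min_cut_transversal:
  assumes "X \<in> min_cuts E src dst s t"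
  shows "transversal X"
proof -
  have "\<exists>!i. i < length p \<and> p ! i \<in> X" if p: "p \<in> P" for p
  proof -
    obtain e where e: "X \<inter> set p = {e}"
      using min_cut_meets_paths_once(2)[OF assms p] by (meson card_1_singletonE)
    then have "e \<in> set p"
      by blast
    then obtain i where i: "i < length p" "p ! i = e"
      by (auto simp: in_set_conv_nth)
    have "j = i" if "j < length p" "p ! j \<in> X" for j
    proof -
      have "p ! j = p ! i"
        using that i e nth_mem[OF that(1)] by blast
      then show ?thesis
        using that(1) i(1) distinct_P[OF p] by (simp add: nth_eq_iff_index_eq)
    qed
    then show ?thesis
      using i e by blast
  qed
  then show ?thesis
    using min_cut_meets_paths_once(1)[OF assms] by (simp add: transversal_def)
qed

lemma cut_pos:
  assumes "transversal A" "p \<in> P"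
  shows "cut_pos A p < length p" and "p ! cut_pos A p \<in> A"
proof -
  have "\<exists>!i. i < length p \<and> p ! i \<in> A"
    using assms by (simp add: transversal_def)
  then have "cut_pos A p < length p \<and> p ! cut_pos A p \<in> A"
    unfolding cut_pos_def by (rule theI')
  then show "cut_pos A p < length p" and "p ! cut_pos A p \<in> A"
    by simp_all
qed

lemma nth_in_transversal_iff:
  assumes "transversal A" "p \<in> P" "i < length p"
  shows "p ! i \<in> A \<longleftrightarrow> i = cut_pos A p"
proof
  have "\<exists>!i. i < length p \<and> p ! i \<in> A"
    using assms by (simp add: transversal_def)
  then show "p ! i \<in> A \<Longrightarrow> i = cut_pos A p"
    unfolding cut_pos_def using assms(3) by (simp add: the1_equality)
  show "i = cut_pos A p \<Longrightarrow> p ! i \<in> A"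
    using cut_pos[OF assms(1,2)] by simp
qed

lemma transversal_Int_path:
  assumes "transversal A" "p \<in> P"
  shows "A \<inter> set p = {p ! cut_pos A p}"
proof (intro equalityI subsetI)
  fix e assume "e \<in> A \<inter> set p"
  then obtain i where "i < length p" "p ! i = e" "p ! i \<in> A"
    by (auto simp: in_set_conv_nth)
  then show "e \<in> {p ! cut_pos A p}"
    using nth_in_transversal_iff[OF assms \<open>i < length p\<close>] by simp
qed (use cut_pos[OF assms] in auto)

lemma transversal_subset_E: "transversal A \<Longrightarrow> A \<subseteq> E"
  using path_edges_subset by (auto simp: transversal_def)

lemma card_Int_transversals:
  assumes "transversal A" "transversal B"
  shows "card (A \<inter> B) = (\<Sum>p\<in>P. of_bool (cut_pos A p = cut_pos B p))"
proof -
  have "A \<inter> B \<inter> path_edges = A \<inter> B"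
    using assms(1) by (auto simp: transversal_def)
  then have "card (A \<inter> B) = (\<Sum>p\<in>P. card (A \<inter> B \<inter> set p))"
    using card_Int_path_edges[of "A \<inter> B"] by simp
  also have "\<dots> = (\<Sum>p\<in>P. of_bool (cut_pos A p = cut_pos B p))"
  proof (intro sum.cong refl)
    fix p assume p: "p \<in> P"
    have "A \<inter> B \<inter> set p = (A \<inter> set p) \<inter> (B \<inter> set p)"
      by blast
    also have "\<dots> = {p ! cut_pos A p} \<inter> {p ! cut_pos B p}"
      by (simp only: transversal_Int_path[OF assms(1) p] transversal_Int_path[OF assms(2) p])
    finally have "A \<inter> B \<inter> set p = {p ! cut_pos A p} \<inter> {p ! cut_pos B p}" .
    moreover have "p ! cut_pos A p = p ! cut_pos B p \<longleftrightarrow> cut_pos A p = cut_pos B p"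
      using distinct_P[OF p] cut_pos(1)[OF assms(1) p] cut_pos(1)[OF assms(2) p]
      by (simp add: nth_eq_iff_index_eq)
    ultimately show "card (A \<inter> B \<inter> set p) = of_bool (cut_pos A p = cut_pos B p)"
      by simp
  qed
  finally show ?thesis .
qed

lemma cut_pos_mono:
  assumes "transversal X" "transversal Y" "cut_le E src dst s t X Y" "p \<in> P"
  shows "cut_pos X p \<le> cut_pos Y p"
proof -
  obtain i j where "i \<le> j" "j < length p" "p ! i \<in> X" "p ! j \<in> Y"
    using assms(3) is_path_P[OF assms(4)] unfolding cut_le_def by blast
  then show ?thesis
    using nth_in_transversal_iff[OF assms(1,4), of i] nth_in_transversal_iff[OF assms(2,4), of j]
    by simp
qed

lemma transversal_image_nth:
  assumes "\<forall>q\<in>P. f q < length q"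
  shows "transversal ((\<lambda>q. q ! f q) ` P)"
    and "p \<in> P \<Longrightarrow> cut_pos ((\<lambda>q. q ! f q) ` P) p = f p"
proof -
  let ?A = "(\<lambda>q. q ! f q) ` P"
  have picked: "p ! i \<in> ?A \<longleftrightarrow> i = f p" if p: "p \<in> P" and i: "i < length p" for p i
  proof
    assume "p ! i \<in> ?A"
    then obtain q where q: "q \<in> P" "p ! i = q ! f q"
      by blast
    then have "p ! i \<in> set p \<inter> set q"
      using nth_mem[OF i] nth_mem[of "f q" q] assms by auto
    then have "q = p"
      using disjoint_P[OF q(1) p] by blast
    then show "i = f p"
      using q i p assms distinct_P[OF p] by (simp add: nth_eq_iff_index_eq)
  qed (use p in simp)
  have "?A \<subseteq> path_edges"
    using assms by (auto simp: path_edges_def)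
  moreover have "\<exists>!i. i < length p \<and> p ! i \<in> ?A" if "p \<in> P" for p
    using picked[OF that] assms that by blast
  ultimately show transversal: "transversal ?A"
    by (simp add: transversal_def)
  show "cut_pos ?A p = f p" if "p \<in> P"
    using nth_in_transversal_iff[OF transversal that, of "f p"] picked[OF that, of "f p"] assms that
    by simp
qed

lemma S_max_Un_transversals:
  assumes "transversal X" "transversal Y"
  shows "S_max P (X \<union> Y) = (\<lambda>q. q ! max (cut_pos X q) (cut_pos Y q)) ` P"
  unfolding S_max_def
proof (intro image_cong refl last_filter_eq_nth)
  fix q assume q: "q \<in> P"
  have in_Un: "q ! i \<in> X \<union> Y \<longleftrightarrow> i = cut_pos X q \<or> i = cut_pos Y q" if "i < length q" for i
    using nth_in_transversal_iff[OF assms(1) q that] nth_in_transversal_iff[OF assms(2) q that]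
    by blast
  show "max (cut_pos X q) (cut_pos Y q) < length q"
    using cut_pos(1)[OF assms(1) q] cut_pos(1)[OF assms(2) q] by simp
  then show "q ! max (cut_pos X q) (cut_pos Y q) \<in> X \<union> Y"
    using in_Un by (simp add: max_def)
  show "\<forall>j. max (cut_pos X q) (cut_pos Y q) < j \<and> j < length q \<longrightarrow> q ! j \<notin> X \<union> Y"
    using in_Un by auto
qed

lemma S_min_Un_transversals:
  assumes "transversal X" "transversal Y"
  shows "S_min P (X \<union> Y) = (\<lambda>q. q ! min (cut_pos X q) (cut_pos Y q)) ` P"
  unfolding S_min_def
proof (intro image_cong refl hd_filter_eq_nth)
  fix q assume q: "q \<in> P"
  have in_Un: "q ! i \<in> X \<union> Y \<longleftrightarrow> i = cut_pos X q \<or> i = cut_pos Y q" if "i < length q" for i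
    using nth_in_transversal_iff[OF assms(1) q that] nth_in_transversal_iff[OF assms(2) q that]
    by blast
  show "min (cut_pos X q) (cut_pos Y q) < length q"
    using cut_pos(1)[OF assms(1) q] by simp
  then show "q ! min (cut_pos X q) (cut_pos Y q) \<in> X \<union> Y"
    using in_Un by (simp add: min_def)
  show "\<forall>j<min (cut_pos X q) (cut_pos Y q). q ! j \<notin> X \<union> Y"
    using in_Un cut_pos(1)[OF assms(1) q] by auto
qed

lemma transversal_S_max:
  assumes "transversal X" "transversal Y"
  shows "transversal (S_max P (X \<union> Y))"
    and "p \<in> P \<Longrightarrow> cut_pos (S_max P (X \<union> Y)) p = max (cut_pos X p) (cut_pos Y p)"
proof -
  have "\<forall>q\<in>P. max (cut_pos X q) (cut_pos Y q) < length q"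
    using cut_pos(1)[OF assms(1)] cut_pos(1)[OF assms(2)] by simp
  from transversal_image_nth[OF this] show "transversal (S_max P (X \<union> Y))"
    and "p \<in> P \<Longrightarrow> cut_pos (S_max P (X \<union> Y)) p = max (cut_pos X p) (cut_pos Y p)"
    by (simp_all add: S_max_Un_transversals[OF assms])
qed

lemma transversal_S_min:
  assumes "transversal X" "transversal Y"
  shows "transversal (S_min P (X \<union> Y))"
    and "p \<in> P \<Longrightarrow> cut_pos (S_min P (X \<union> Y)) p = min (cut_pos X p) (cut_pos Y p)"
proof -
  have "\<forall>q\<in>P. min (cut_pos X q) (cut_pos Y q) < length q"
    using cut_pos(1)[OF assms(1)] by (simp add: min.strict_coboundedI1)
  from transversal_image_nth[OF this] show "transversal (S_min P (X \<union> Y))"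
    and "p \<in> P \<Longrightarrow> cut_pos (S_min P (X \<union> Y)) p = min (cut_pos X p) (cut_pos Y p)"
    by (simp_all add: S_min_Un_transversals[OF assms])
qed

lemma card_S_max_Int_plus_card_S_min_Int_le:
  assumes "transversal X" "transversal Y" "transversal X'" "transversal Y'"
    and "cut_le E src dst s t X X'" "cut_le E src dst s t Y Y'"
  shows "card (S_max P (X \<union> Y) \<inter> S_max P (X' \<union> Y')) + card (S_min P (X \<union> Y) \<inter> S_min P (X' \<union> Y'))
    \<le> card (X \<inter> X') + card (Y \<inter> Y')"
proof -
  have "card (S_max P (X \<union> Y) \<inter> S_max P (X' \<union> Y')) + card (S_min P (X \<union> Y) \<inter> S_min P (X' \<union> Y'))
      = (\<Sum>p\<in>P. of_bool (max (cut_pos X p) (cut_pos Y p) = max (cut_pos X' p) (cut_pos Y' p))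
               + of_bool (min (cut_pos X p) (cut_pos Y p) = min (cut_pos X' p) (cut_pos Y' p)))"
    using assms(1-4)
    by (simp add: card_Int_transversals transversal_S_max transversal_S_min sum.distrib)
  also have "\<dots> \<le>
      (\<Sum>p\<in>P. of_bool (cut_pos X p = cut_pos X' p) + of_bool (cut_pos Y p = cut_pos Y' p))"
    using assms cut_pos_mono by (intro sum_mono of_bool_max_eq_plus_of_bool_min_eq_le) auto
  also have "\<dots> = card (X \<inter> X') + card (Y \<inter> Y')"
    using assms(1-4) by (simp add: card_Int_transversals sum.distrib)
  finally show ?thesis .
qed

lemma d_sum_tuple_join_meet_le:
  assumes "length C1 = length C2"
    and "\<forall>X\<in>set C1. transversal X" "\<forall>X\<in>set C2. transversal X"
    and "\<And>i j. i < j \<Longrightarrow> j < length C1 \<Longrightarrow> cut_le E src dst s t (C1 ! i) (C1 ! j)"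
    and "\<And>i j. i < j \<Longrightarrow> j < length C2 \<Longrightarrow> cut_le E src dst s t (C2 ! i) (C2 ! j)"
  shows "d_sum E (tuple_join P C1 C2) + d_sum E (tuple_meet P C1 C2) \<le> d_sum E C1 + d_sum E C2"
proof -
  let ?J = "tuple_join P C1 C2" and ?M = "tuple_meet P C1 C2"
  let ?Pairs = "{(i, j). i < j \<and> j < length C1}"
  have tr: "transversal (C1 ! i)" "transversal (C2 ! i)" if "i < length C1" for i
    using assms(1-3) that by auto
  have "\<forall>X\<in>set C1. X \<subseteq> E" "\<forall>X\<in>set C2. X \<subseteq> E"
    using assms(2,3) transversal_subset_E by blast+
  have nth_J: "?J ! i = S_max P (C1 ! i \<union> C2 ! i)" and nth_M: "?M ! i = S_min P (C1 ! i \<union> C2 ! i)"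
    if "i < length C1" for i
    using assms(1) that by (simp_all add: tuple_join_def tuple_meet_def)
  have len: "length ?J = length C1" "length ?M = length C1"
    using assms(1) by (simp_all add: tuple_join_def tuple_meet_def)
  have "?J ! i \<subseteq> E" "?M ! i \<subseteq> E" if "i < length C1" for i
    using tr[OF that] transversal_S_max(1) transversal_S_min(1) transversal_subset_E
    by (simp_all add: nth_J[OF that] nth_M[OF that])
  then have "\<forall>X\<in>set ?J. X \<subseteq> E" "\<forall>X\<in>set ?M. X \<subseteq> E"
    using len by (metis in_set_conv_nth)+
  then have "d_sum E ?J + d_sum E ?M =
      (\<Sum>(i, j)\<in>?Pairs. card (?J ! i \<inter> ?J ! j) + card (?M ! i \<inter> ?M ! j))"
    by (simp add: d_sum_eq_sum_pairs[OF finite_E] len sum.distrib[symmetric] split_def)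
  also have "\<dots> = (\<Sum>(i, j)\<in>?Pairs.
      card (S_max P (C1 ! i \<union> C2 ! i) \<inter> S_max P (C1 ! j \<union> C2 ! j))
      + card (S_min P (C1 ! i \<union> C2 ! i) \<inter> S_min P (C1 ! j \<union> C2 ! j)))"
    by (intro sum.cong refl) (auto simp: nth_J nth_M)
  also have "\<dots> \<le> (\<Sum>(i, j)\<in>?Pairs. card (C1 ! i \<inter> C1 ! j) + card (C2 ! i \<inter> C2 ! j))"
    using tr assms(1,4,5) by (intro sum_mono) (auto intro!: card_S_max_Int_plus_card_S_min_Int_le)
  also have "\<dots> = d_sum E C1 + d_sum E C2"
    using assms(1) \<open>\<forall>X\<in>set C1. X \<subseteq> E\<close> \<open>\<forall>X\<in>set C2. X \<subseteq> E\<close>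
    by (simp add: d_sum_eq_sum_pairs[OF finite_E] sum.distrib split_def)
  finally show ?thesis .
qed

end

theorem theorem6:
  fixes E :: "'e set" and src dst :: "'e \<Rightarrow> 'v" and s t :: 'v and k :: nat
    and P :: "'e list set" and C1 C2 :: "'e set list"
  assumes "finite E"
    and "k \<ge> 1"
    and "max_disjoint_paths E src dst s t P"
    and "C1 \<in> U_lr E src dst s t k"
    and "C2 \<in> U_lr E src dst s t k"
  shows "d_sum E (tuple_join P C1 C2) + d_sum E (tuple_meet P C1 C2)
           \<le> d_sum E C1 + d_sum E C2"
proof -
  interpret path_packing E src dst s t P
    using assms(1,3) by unfold_locales
  have "\<forall>X\<in>set C. transversal X" if "C \<in> U_lr E src dst s t k" for C
    using that min_cut_transversal by (auto simp: U_lr_def in_set_conv_nth)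
  with assms(4,5) show ?thesis
    by (intro d_sum_tuple_join_meet_le) (auto simp: U_lr_def)
qed

end
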